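(* In every BZ algebra, and in every BCC algebra, property (Ex) holds if and only if property (BB) holds.
   Context: Let $(A,\to,1)$ be an algebra of type $(2,0)$. Properties, required for all $x,y,z\in A$: (Re) $x\to x=1$; (M) $1\to x=x$; (L) $x\to 1=1$; (B) $(y\to z)\to((x\to y)\to(x\to z))=1$; (An) $x\to y=1$ and $y\to x=1$ imply $x=y$; (Ex) $x\to(y\to z)=y\to(x\to z)$; (BB) $(y\to z)\to((z\to x)\to(y\to x))=1$. A BZ algebra is an algebra satisfying (Re), (M), (B), (An). A BCC algebra is an algebra satisfying (Re), (M), (L), (B), (An). *)

theory Defs
  imports Main
begin

definition prop_Re :: "('a \<Rightarrow> 'a \<Rightarrow> 'a) \<Rightarrow> 'a \<Rightarrow> bool" where
  "prop_Re imp one \<longleftrightarrow> (\<forall>x. imp x x = one)"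

definition prop_M :: "('a \<Rightarrow> 'a \<Rightarrow> 'a) \<Rightarrow> 'a \<Rightarrow> bool" where
  "prop_M imp one \<longleftrightarrow> (\<forall>x. imp one x = x)"

definition prop_L :: "('a \<Rightarrow> 'a \<Rightarrow> 'a) \<Rightarrow> 'a \<Rightarrow> bool" where
  "prop_L imp one \<longleftrightarrow> (\<forall>x. imp x one = one)"

definition prop_B :: "('a \<Rightarrow> 'a \<Rightarrow> 'a) \<Rightarrow> 'a \<Rightarrow> bool" where
  "prop_B imp one \<longleftrightarrow>
     (\<forall>x y z. imp (imp y z) (imp (imp x y) (imp x z)) = one)"

definition prop_An :: "('a \<Rightarrow> 'a \<Rightarrow> 'a) \<Rightarrow> 'a \<Rightarrow> bool" where
  "prop_An imp one \<longleftrightarrow> (\<forall>x y. imp x y = one \<and> imp y x = one \<longrightarrow> x = y)"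

definition prop_Ex :: "('a \<Rightarrow> 'a \<Rightarrow> 'a) \<Rightarrow> bool" where
  "prop_Ex imp \<longleftrightarrow> (\<forall>x y z. imp x (imp y z) = imp y (imp x z))"

definition prop_BB :: "('a \<Rightarrow> 'a \<Rightarrow> 'a) \<Rightarrow> 'a \<Rightarrow> bool" where
  "prop_BB imp one \<longleftrightarrow>
     (\<forall>x y z. imp (imp y z) (imp (imp z x) (imp y x)) = one)"

definition BZ_algebra :: "('a \<Rightarrow> 'a \<Rightarrow> 'a) \<Rightarrow> 'a \<Rightarrow> bool" where
  "BZ_algebra imp one \<longleftrightarrow>
     prop_Re imp one \<and> prop_M imp one \<and> prop_B imp one \<and> prop_An imp one"

definition BCC_algebra :: "('a \<Rightarrow> 'a \<Rightarrow> 'a) \<Rightarrow> 'a \<Rightarrow> bool" where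
  "BCC_algebra imp one \<longleftrightarrow>
     prop_Re imp one \<and> prop_M imp one \<and> prop_L imp one \<and> prop_B imp one \<and> prop_An imp one"

end

theory Submission
  imports Defs
begin

text \<open>
  (Ex) turns (B) into (BB) by exchanging the two outer premises.  Conversely, with (M) the
  axioms (B) and (BB) say that \<open>x \<rightarrow> y = 1\<close> is a preorder for which \<open>y \<rightarrow> z\<close> is monotone in
  \<open>z\<close> and antitone in \<open>y\<close>; since \<open>y \<le> (y \<rightarrow> z) \<rightarrow> z\<close> by (BB), chaining gives
  \<open>x \<rightarrow> (y \<rightarrow> z) \<le> ((y \<rightarrow> z) \<rightarrow> z) \<rightarrow> (x \<rightarrow> z) \<le> y \<rightarrow> (x \<rightarrow> z)\<close>, and (An) applied to this
  inequality and its mirror image yields (Ex).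
\<close>

lemma prop_Ex_B_imp_BB:
  assumes "prop_Ex imp" and "prop_B imp one"
  shows "prop_BB imp one"
  unfolding prop_BB_def
proof (intro allI)
  fix x y z
  have "imp (imp z x) (imp (imp y z) (imp y x)) = one"
    using assms(2) unfolding prop_B_def by blast
  moreover have "imp (imp z x) (imp (imp y z) (imp y x))
      = imp (imp y z) (imp (imp z x) (imp y x))"
    using assms(1) unfolding prop_Ex_def by blast
  ultimately show "imp (imp y z) (imp (imp z x) (imp y x)) = one"
    by simp
qed

lemma prop_B_M_trans:
  assumes "prop_B imp one" and "prop_M imp one"
    and "imp a b = one" and "imp b c = one"
  shows "imp a c = one"
proof -
  have "imp (imp b c) (imp (imp a b) (imp a c)) = one"
    using assms(1) unfolding prop_B_def by blast
  then show ?thesis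
    using assms(2-4) unfolding prop_M_def by simp
qed

lemma prop_BB_M_antitone:
  assumes "prop_BB imp one" and "prop_M imp one" and "imp a b = one"
  shows "imp (imp b w) (imp a w) = one"
proof -
  have "imp (imp a b) (imp (imp b w) (imp a w)) = one"
    using assms(1) unfolding prop_BB_def by blast
  then show ?thesis
    using assms(2,3) unfolding prop_M_def by simp
qed

lemma prop_BB_M_le_double_imp:
  assumes "prop_BB imp one" and "prop_M imp one"
  shows "imp a (imp (imp a w) w) = one"
proof -
  have "imp (imp one a) (imp (imp a w) (imp one w)) = one"
    using assms(1) unfolding prop_BB_def by blast
  then show ?thesis
    using assms(2) unfolding prop_M_def by simp
qed

lemma prop_BB_imp_Ex:
  assumes BB: "prop_BB imp one" and M: "prop_M imp one"
    and B: "prop_B imp one" and An: "prop_An imp one"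
  shows "prop_Ex imp"
proof -
  have le: "imp (imp x (imp y z)) (imp y (imp x z)) = one" for x y z
  proof (rule prop_B_M_trans[OF B M])
    show "imp (imp x (imp y z)) (imp (imp (imp y z) z) (imp x z)) = one"
      using BB unfolding prop_BB_def by blast
    show "imp (imp (imp (imp y z) z) (imp x z)) (imp y (imp x z)) = one"
      using prop_BB_M_antitone[OF BB M prop_BB_M_le_double_imp[OF BB M]] .
  qed
  show ?thesis
    unfolding prop_Ex_def
  proof (intro allI)
    fix x y z
    show "imp x (imp y z) = imp y (imp x z)"
      using An le[of x y z] le[of y x z] unfolding prop_An_def by blast
  qed
qed

lemma BZ_algebra_Ex_iff_BB:
  assumes "BZ_algebra imp one"
  shows "prop_Ex imp \<longleftrightarrow> prop_BB imp one"
  using assms prop_Ex_B_imp_BB[of imp one] prop_BB_imp_Ex[of imp one]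
  unfolding BZ_algebra_def by blast

lemma BCC_algebra_imp_BZ_algebra:
  "BCC_algebra imp one \<Longrightarrow> BZ_algebra imp one"
  unfolding BCC_algebra_def BZ_algebra_def by blast

theorem corollary2p5:
  fixes imp :: "'a \<Rightarrow> 'a \<Rightarrow> 'a" and one :: 'a
  shows "(BZ_algebra imp one \<longrightarrow> (prop_Ex imp \<longleftrightarrow> prop_BB imp one)) \<and>
         (BCC_algebra imp one \<longrightarrow> (prop_Ex imp \<longleftrightarrow> prop_BB imp one))"
  using BZ_algebra_Ex_iff_BB[of imp one] BCC_algebra_imp_BZ_algebra[of imp one] by blast

end
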